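(* For disjoint $I,J\subset\{1,\dots,n\}$, the function $g(I,J)=\bigl(\Psi^{*(-1)}*D_I\Psi\bigr)(J)$ satisfies \[ g(\emptyset,J)=\delta_{\emptyset,J},\qquad g(I,J)=\Bigl(\prod_{i\in I'}(1+\zeta_{i,\iota(I)})\Bigr)\sum_{K\subset J}\Bigl(\prod_{i\in K}\zeta_{i,\iota(I)}\Bigr)g(I'\cup K,J\setminus K)\quad\text{if }I\neq\emptyset, \] where $I'=I\setminus\{\iota(I)\}$. (This system of equations determines $g$ uniquely by induction on $|I|+|J|$.)
   Context: Fix $n\ge1$, real numbers $b_1,\dots,b_n\ge0$ and complex numbers $\zeta_{ij}=\zeta_{ji}$ such that $\prod_{i,j\in I,i<j}|1+\zeta_{ij}|\le\prod_{i\in I}e^{b_i}$ for every $I\subset\{1,\dots,n\}$. Let $\mathcal{A}$ be the set of complex functions on the power set of $\{1,\dots,n\}$, with product $f*g(I)=\sum_{J\subset I}f(J)g(I\setminus J)$; this is a commutative algebra with unit $1_{\mathcal A}(I)=\delta_{I,\emptyset}$, and any $f$ with $f(\emptyset)\neq0$ has a unique $*$-inverse $f^{*(-1)}$. For $I\subset\{1,\dots,n\}$ define $D_If(J)=f(I\cup J)$ if $I\cap J=\emptyset$ and $D_If(J)=0$ otherwise. Let $\Psi(I)=\prod_{i,j\in I,i<j}(1+\zeta_{ij})$ (so $\Psi(\emptyset)=1$). Let $\iota$ be a function assigning to each nonempty $I\subset\{1,\dots,n\}$ an element $\iota(I)\in I$ such that $\prod_{j\in I\setminus\{\iota(I)\}}|1+\zeta_{j,\iota(I)}|\le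 e^{2b_{\iota(I)}}$ (such an element exists by the hypothesis). Empty sums are $0$, empty products are $1$. *)

theory Defs
  imports Complex_Main
begin

text \<open>Functions on the power set of {1..n} are modelled as functions nat set => complex;
  only their values on subsets of {1..n} matter.\<close>

definition setconv :: "(nat set \<Rightarrow> complex) \<Rightarrow> (nat set \<Rightarrow> complex) \<Rightarrow> nat set \<Rightarrow> complex"
  where "setconv f g I = (\<Sum>J\<in>Pow I. f J * g (I - J))"

definition setunit :: "nat set \<Rightarrow> complex"
  where "setunit I = (if I = {} then 1 else 0)"

definition setconv_inv :: "nat \<Rightarrow> (nat set \<Rightarrow> complex) \<Rightarrow> nat set \<Rightarrow> complex"
  where "setconv_inv n f = (THE h. (\<forall>I. I \<subseteq> {1..n} \<longrightarrow> setconv f h I = setunit I)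
                                  \<and> (\<forall>I. \<not> I \<subseteq> {1..n} \<longrightarrow> h I = 0))"

definition setD :: "nat set \<Rightarrow> (nat set \<Rightarrow> complex) \<Rightarrow> nat set \<Rightarrow> complex"
  where "setD I f J = (if I \<inter> J = {} then f (I \<union> J) else 0)"

definition Psi :: "(nat \<Rightarrow> nat \<Rightarrow> complex) \<Rightarrow> nat set \<Rightarrow> complex"
  where "Psi \<zeta> I = (\<Prod>(i, j)\<in>{(i, j). i \<in> I \<and> j \<in> I \<and> i < j}. 1 + \<zeta> i j)"

end

theory Submission
  imports Defs
begin

(*
  Write * for the subset convolution (setconv), \<Psi> for Psi \<zeta>, and g(I,J) = (\<Psi>^{*-1} * D_I \<Psi>)(J).

  The first equation is the defining property of the inverse: D_{} \<Psi> = \<Psi>, so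
  g({},.) = \<Psi>^{*-1} * \<Psi> = 1.  We therefore first show that setconv_inv really is a
  two-sided *-inverse: a solution of the triangular system f * h = 1 is constructed by
  recursion on the cardinality (setinv_rec), it is the unique one, and * is commutative.

  The second equation is a purely combinatorial identity for \<Psi>.  Splitting off the
  pair factors containing i0 = \<iota>(I) gives, for M disjoint from I,
      \<Psi>(I \<union> M) = \<Psi>(I' \<union> M) * \<Prod>_{i\<in>I'}(1 + \<zeta>_{i,i0}) * \<Sum>_{K\<subseteq>M} \<Prod>_{i\<in>K} \<zeta>_{i,i0},
  and inserting this with M = J - L into (\<Phi> * D_I \<Psi>)(J) = \<Sum>_{L\<subseteq>J} \<Phi>(L) \<Psi>(I \<union> (J-L)),
  then exchanging the sums over disjoint pairs (L,K) of subsets of J, yields the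
  recursion for any function \<Phi> in place of \<Psi>^{*-1}.
*)

text \<open>Subset convolution is commutative (on finite sets), by the reflection J \<mapsto> I - J.\<close>
lemma setconv_commute: "finite I \<Longrightarrow> setconv f g I = setconv g f I"
  unfolding setconv_def
  by (rule sum.reindex_bij_witness[of _ "\<lambda>J. I - J" "\<lambda>J. I - J"])
     (auto simp: double_diff mult.commute)

text \<open>Separating the term J = {} of a convolution: the system f * h = 1 is triangular.\<close>
lemma setconv_split_empty:
  assumes "finite I"
  shows "setconv f h I = f {} * h I + (\<Sum>J\<in>Pow I - {{}}. f J * h (I - J))"
  unfolding setconv_def using assms by (subst sum.remove[of _ "{}"]) auto

function setinv_rec :: "nat \<Rightarrow> (nat set \<Rightarrow> complex) \<Rightarrow> nat set \<Rightarrow> complex" where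
  "setinv_rec n f I =
     (if I \<subseteq> {1..n}
      then (setunit I - (\<Sum>J\<in>Pow I - {{}}. f J * setinv_rec n f (I - J))) / f {}
      else 0)"
  by auto
termination
proof (relation "measure (\<lambda>(n, f, I). card I)")
  fix n :: nat and f :: "nat set \<Rightarrow> complex" and I J :: "nat set"
  assume "I \<subseteq> {1..n}" "J \<in> Pow I - {{}}"
  moreover have "finite I" using \<open>I \<subseteq> {1..n}\<close> by (rule finite_subset[OF _ finite_atLeastAtMost])
  ultimately show "((n, f, I - J), n, f, I) \<in> measure (\<lambda>(n, f, I). card I)"
    by (auto intro!: psubset_card_mono)
qed simp

declare setinv_rec.simps [simp del]

definition is_setinv :: "nat \<Rightarrow> (nat set \<Rightarrow> complex) \<Rightarrow> (nat set \<Rightarrow> complex) \<Rightarrow> bool" where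
  "is_setinv n f h \<longleftrightarrow> (\<forall>I. I \<subseteq> {1..n} \<longrightarrow> setconv f h I = setunit I)
                        \<and> (\<forall>I. \<not> I \<subseteq> {1..n} \<longrightarrow> h I = 0)"

lemma setinv_rec_is_setinv:
  assumes "f {} \<noteq> 0"
  shows "is_setinv n f (setinv_rec n f)"
  unfolding is_setinv_def
proof (intro conjI allI impI)
  fix I :: "nat set" assume I: "I \<subseteq> {1..n}"
  then have "finite I" by (rule finite_subset) simp
  then show "setconv f (setinv_rec n f) I = setunit I"
    using I assms by (subst setconv_split_empty) (simp_all add: setinv_rec.simps[of n f I])
qed (simp add: setinv_rec.simps)

text \<open>Any two solutions agree, by strong induction over finite sets: both satisfy the
  same triangular recursion.\<close>
lemma is_setinv_unique:
  assumes f0: "f {} \<noteq> 0" and h1: "is_setinv n f h1" and h2: "is_setinv n f h2"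
  shows "h1 = h2"
proof
  fix I
  show "h1 I = h2 I"
  proof (cases "I \<subseteq> {1..n}")
    case False
    then show ?thesis using h1 h2 by (simp add: is_setinv_def)
  next
    case True
    have "finite I" using True by (rule finite_subset) simp
    then show ?thesis using True
    proof (induction I rule: finite_psubset_induct)
      case (psubset I)
      have lower: "(\<Sum>J\<in>Pow I - {{}}. f J * h1 (I - J)) = (\<Sum>J\<in>Pow I - {{}}. f J * h2 (I - J))"
        using psubset.IH psubset.prems by (intro sum.cong) auto
      have "setconv f h1 I = setconv f h2 I"
        using h1 h2 psubset.prems by (simp add: is_setinv_def)
      then show ?case
        using lower f0 by (simp add: setconv_split_empty[OF psubset.hyps])
    qed
  qed
qed

lemma setconv_inv_left:
  assumes f0: "f {} \<noteq> 0" and I: "I \<subseteq> {1..n}"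
  shows "setconv (setconv_inv n f) f I = setunit I"
proof -
  have "is_setinv n f (setconv_inv n f)"
    unfolding setconv_inv_def is_setinv_def[symmetric]
    by (rule theI[of _ "setinv_rec n f"])
       (use setinv_rec_is_setinv[of f n] is_setinv_unique[of f n] f0 in auto)
  then have "setconv f (setconv_inv n f) I = setunit I"
    using I by (simp add: is_setinv_def)
  moreover have "finite I" using I by (rule finite_subset) simp
  ultimately show ?thesis by (simp add: setconv_commute)
qed

lemma Psi_insert:
  assumes fin: "finite S" and nin: "i0 \<notin> S" and sym: "\<forall>j\<in>S. \<zeta> j i0 = \<zeta> i0 j"
  shows "Psi \<zeta> (insert i0 S) = Psi \<zeta> S * (\<Prod>j\<in>S. 1 + \<zeta> j i0)"
proof -
  let ?A = "{(i, j). i \<in> S \<and> j \<in> S \<and> i < j}"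
  let ?B = "Pair i0 ` {j\<in>S. i0 < j}"
  let ?C = "(\<lambda>j. (j, i0)) ` {j\<in>S. j < i0}"
  have finA: "finite ?A" by (rule finite_subset[of _ "S \<times> S"]) (use fin in auto)
  have pairs: "{(i, j). i \<in> insert i0 S \<and> j \<in> insert i0 S \<and> i < j} = ?A \<union> (?B \<union> ?C)"
    by auto
  have "Psi \<zeta> (insert i0 S) = (\<Prod>(i, j)\<in>?A. 1 + \<zeta> i j) * (\<Prod>(i, j)\<in>?B \<union> ?C. 1 + \<zeta> i j)"
    unfolding Psi_def pairs by (rule prod.union_disjoint) (use fin nin finA in auto)
  also have "(\<Prod>(i, j)\<in>?B \<union> ?C. 1 + \<zeta> i j) = (\<Prod>(i, j)\<in>?B. 1 + \<zeta> i j) * (\<Prod>(i, j)\<in>?C. 1 + \<zeta> i j)"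
    by (rule prod.union_disjoint) (use fin in auto)
  also have "(\<Prod>(i, j)\<in>?B. 1 + \<zeta> i j) = (\<Prod>j\<in>{j\<in>S. i0 < j}. 1 + \<zeta> j i0)"
    by (subst prod.reindex) (use sym in \<open>auto intro: inj_onI intro!: prod.cong\<close>)
  also have "(\<Prod>(i, j)\<in>?C. 1 + \<zeta> i j) = (\<Prod>j\<in>{j\<in>S. j < i0}. 1 + \<zeta> j i0)"
    by (subst prod.reindex) (auto intro: inj_onI)
  also have "(\<Prod>j\<in>{j\<in>S. i0 < j}. 1 + \<zeta> j i0) * (\<Prod>j\<in>{j\<in>S. j < i0}. 1 + \<zeta> j i0)
      = (\<Prod>j\<in>{j\<in>S. i0 < j} \<union> {j\<in>S. j < i0}. 1 + \<zeta> j i0)"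
    by (rule prod.union_disjoint[symmetric]) (use fin in auto)
  also have "{j\<in>S. i0 < j} \<union> {j\<in>S. j < i0} = S"
    using nin by auto (metis linorder_neqE_nat)
  finally show ?thesis unfolding Psi_def by simp
qed

lemma Psi_union_expand:
  assumes fin: "finite I" "finite M" and disj: "I \<inter> M = {}" and i0: "i0 \<in> I"
    and sym: "\<forall>j\<in>I \<union> M. \<zeta> j i0 = \<zeta> i0 j"
  shows "Psi \<zeta> (I \<union> M) = Psi \<zeta> ((I - {i0}) \<union> M) * (\<Prod>i\<in>I - {i0}. 1 + \<zeta> i i0)
                           * (\<Sum>K\<in>Pow M. \<Prod>i\<in>K. \<zeta> i i0)"
proof -
  have "I \<union> M = insert i0 ((I - {i0}) \<union> M)" using i0 by auto
  then have "Psi \<zeta> (I \<union> M) = Psi \<zeta> ((I - {i0}) \<union> M) * (\<Prod>j\<in>(I - {i0}) \<union> M. 1 + \<zeta> j i0)"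
    using Psi_insert[of "(I - {i0}) \<union> M" i0 \<zeta>] fin sym disj i0 by auto
  also have "(\<Prod>j\<in>(I - {i0}) \<union> M. 1 + \<zeta> j i0)
             = (\<Prod>j\<in>I - {i0}. 1 + \<zeta> j i0) * (\<Prod>j\<in>M. 1 + \<zeta> j i0)"
    by (rule prod.union_disjoint) (use fin disj in auto)
  also have "(\<Prod>j\<in>M. 1 + \<zeta> j i0) = (\<Sum>K\<in>Pow M. \<Prod>i\<in>K. \<zeta> i i0)"
    using prod_add[of M "\<lambda>j. \<zeta> j i0" "\<lambda>_. 1"] fin by (simp add: add.commute)
  finally show ?thesis by (simp add: mult.assoc)
qed

lemma sum_Pow_disjoint_swap:
  fixes F :: "'a set \<Rightarrow> 'a set \<Rightarrow> 'b::comm_monoid_add"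
  assumes "finite J"
  shows "(\<Sum>L\<in>Pow J. \<Sum>K\<in>Pow (J - L). F L K) = (\<Sum>K\<in>Pow J. \<Sum>L\<in>Pow (J - K). F L K)"
proof -
  have restrict: "(\<Sum>K\<in>Pow (J - L). G K) = (\<Sum>K\<in>Pow J. if L \<inter> K = {} then G K else 0)"
    for L and G :: "'a set \<Rightarrow> 'b"
  proof -
    have "Pow (J - L) = {K\<in>Pow J. L \<inter> K = {}}" by auto
    then show ?thesis using sum.inter_filter[of "Pow J" G "\<lambda>K. L \<inter> K = {}"] assms by simp
  qed
  have "(\<Sum>L\<in>Pow J. \<Sum>K\<in>Pow (J - L). F L K)
        = (\<Sum>L\<in>Pow J. \<Sum>K\<in>Pow J. if L \<inter> K = {} then F L K else 0)"
    by (simp add: restrict)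
  also have "\<dots> = (\<Sum>K\<in>Pow J. \<Sum>L\<in>Pow J. if K \<inter> L = {} then F L K else 0)"
    by (subst sum.swap) (simp add: Int_commute)
  also have "\<dots> = (\<Sum>K\<in>Pow J. \<Sum>L\<in>Pow (J - K). F L K)"
    by (simp add: restrict)
  finally show ?thesis .
qed

lemma setconv_setD_Psi_recursion:
  assumes finJ: "finite J" and finI: "finite I" and disj: "I \<inter> J = {}" and i0: "i0 \<in> I"
    and sym: "\<forall>j\<in>I \<union> J. \<zeta> j i0 = \<zeta> i0 j"
  shows "setconv \<Phi> (setD I (Psi \<zeta>)) J = (\<Prod>i\<in>I - {i0}. 1 + \<zeta> i i0) *
     (\<Sum>K\<in>Pow J. (\<Prod>i\<in>K. \<zeta> i i0) * setconv \<Phi> (setD ((I - {i0}) \<union> K) (Psi \<zeta>)) (J - K))"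
proof -
  let ?I' = "I - {i0}"
  let ?z = "\<lambda>K. \<Prod>i\<in>K. \<zeta> i i0"
  let ?F = "\<lambda>L K. ?z K * (\<Phi> L * Psi \<zeta> (?I' \<union> (J - L)))"
  have expand: "Psi \<zeta> (I \<union> (J - L)) = Psi \<zeta> (?I' \<union> (J - L)) * (\<Prod>i\<in>?I'. 1 + \<zeta> i i0)
                  * (\<Sum>K\<in>Pow (J - L). ?z K)" for L
    using Psi_union_expand[of I "J - L" i0 \<zeta>] finI finJ disj i0 sym by auto
  have inner: "(\<Sum>L\<in>Pow (J - K). ?F L K) = ?z K * setconv \<Phi> (setD (?I' \<union> K) (Psi \<zeta>)) (J - K)"
    if K: "K \<subseteq> J" for K
  proof -
    have "(?I' \<union> K) \<inter> (J - K - L) = {} \<and> ?I' \<union> K \<union> (J - K - L) = ?I' \<union> (J - L)"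
      if "L \<subseteq> J - K" for L
      using disj K that by auto
    then show ?thesis
      unfolding setconv_def setD_def sum_distrib_left by (intro sum.cong) auto
  qed
  have "setconv \<Phi> (setD I (Psi \<zeta>)) J = (\<Sum>L\<in>Pow J. \<Phi> L * Psi \<zeta> (I \<union> (J - L)))"
    unfolding setconv_def setD_def using disj by (intro sum.cong) auto
  also have "\<dots> = (\<Prod>i\<in>?I'. 1 + \<zeta> i i0) * (\<Sum>L\<in>Pow J. \<Sum>K\<in>Pow (J - L). ?F L K)"
    by (simp add: expand sum_distrib_left sum_distrib_right mult_ac)
  also have "(\<Sum>L\<in>Pow J. \<Sum>K\<in>Pow (J - L). ?F L K) = (\<Sum>K\<in>Pow J. \<Sum>L\<in>Pow (J - K). ?F L K)"
    using finJ by (rule sum_Pow_disjoint_swap)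
  also have "\<dots> = (\<Sum>K\<in>Pow J. ?z K * setconv \<Phi> (setD (?I' \<union> K) (Psi \<zeta>)) (J - K))"
    using inner by (intro sum.cong) auto
  finally show ?thesis .
qed

theorem mainTheorem5:
  fixes n :: nat and b :: "nat \<Rightarrow> real" and \<zeta> :: "nat \<Rightarrow> nat \<Rightarrow> complex"
    and \<iota> :: "nat set \<Rightarrow> nat"
  assumes "n \<ge> 1"
    and b_nonneg: "\<forall>i\<in>{1..n}. b i \<ge> 0"
    and \<zeta>_sym: "\<forall>i\<in>{1..n}. \<forall>j\<in>{1..n}. \<zeta> i j = \<zeta> j i"
    and hyp: "\<forall>I. I \<subseteq> {1..n} \<longrightarrow>
      (\<Prod>(i, j)\<in>{(i, j). i \<in> I \<and> j \<in> I \<and> i < j}. cmod (1 + \<zeta> i j)) \<le> (\<Prod>i\<in>I. exp (b i))"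
    and \<iota>_mem: "\<forall>I. I \<subseteq> {1..n} \<and> I \<noteq> {} \<longrightarrow> \<iota> I \<in> I"
    and \<iota>_bound: "\<forall>I. I \<subseteq> {1..n} \<and> I \<noteq> {} \<longrightarrow>
      (\<Prod>j\<in>I - {\<iota> I}. cmod (1 + \<zeta> j (\<iota> I))) \<le> exp (2 * b (\<iota> I))"
  defines "g \<equiv> (\<lambda>I J. setconv (setconv_inv n (Psi \<zeta>)) (setD I (Psi \<zeta>)) J)"
  shows "(\<forall>J. J \<subseteq> {1..n} \<longrightarrow> g {} J = (if J = {} then 1 else 0))
       \<and> (\<forall>I J. I \<subseteq> {1..n} \<and> J \<subseteq> {1..n} \<and> I \<inter> J = {} \<and> I \<noteq> {} \<longrightarrow>
            g I J = (\<Prod>i\<in>I - {\<iota> I}. 1 + \<zeta> i (\<iota> I)) *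
              (\<Sum>K\<in>Pow J. (\<Prod>i\<in>K. \<zeta> i (\<iota> I)) * g ((I - {\<iota> I}) \<union> K) (J - K)))"
proof (intro conjI allI impI)
  fix J :: "nat set" assume J: "J \<subseteq> {1..n}"
  have "Psi \<zeta> {} = 1" and "setD {} (Psi \<zeta>) = Psi \<zeta>"
    by (simp_all add: Psi_def setD_def fun_eq_iff)
  then show "g {} J = (if J = {} then 1 else 0)"
    using setconv_inv_left[of "Psi \<zeta>" J n] J by (simp add: g_def setunit_def)
next
  fix I J :: "nat set" assume IJ: "I \<subseteq> {1..n} \<and> J \<subseteq> {1..n} \<and> I \<inter> J = {} \<and> I \<noteq> {}"
  then have "\<iota> I \<in> I" using \<iota>_mem by blast
  moreover have "finite I" "finite J" using IJ finite_subset by blast+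
  moreover have "\<forall>j\<in>I \<union> J. \<zeta> j (\<iota> I) = \<zeta> (\<iota> I) j"
    using \<zeta>_sym IJ \<open>\<iota> I \<in> I\<close> by blast
  ultimately show "g I J = (\<Prod>i\<in>I - {\<iota> I}. 1 + \<zeta> i (\<iota> I)) *
              (\<Sum>K\<in>Pow J. (\<Prod>i\<in>K. \<zeta> i (\<iota> I)) * g ((I - {\<iota> I}) \<union> K) (J - K))"
    unfolding g_def using IJ by (intro setconv_setD_Psi_recursion) auto
qed

end
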